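(* For all $f,g\in\mathscr S(\mathbb R)$, the non-cutoff Kac operator $K(g,f)$ (see context) belongs to $\mathscr S(\mathbb R)$.
   Context: Fix $0<s<1$. A cross section is an even measurable $\beta:[-\pi/4,\pi/4]\setminus\{0\}\to[0,\infty)$, integrable on $\{\delta\le|\theta|\le\pi/4\}$ for each $\delta>0$, with $c|\theta|^{-1-2s}\le\beta(\theta)\le C|\theta|^{-1-2s}$ for $0<|\theta|<\delta_0$. For $g$ on $\mathbb R$, $\breve g(v)=\frac12(g(v)+g(-v))$. For $f,g\in\mathscr S(\mathbb R)$, $$K(g,f)(v)=\int_{|\theta|\le\pi/4}\beta(\theta)\Bigl(\int_{\mathbb R}\bigl[\breve g(v'_* )f(v')-\breve g(v_* )f(v)\bigr]dv_*\Bigr)d\theta,\quad v'=v\cos\theta-v_*\sin\theta,\ v'_*=v\sin\theta+v_*\cos\theta,$$ where the $\theta$-integral converges absolutely (equivalently, $K(g,f)(v)=\lim_{\varepsilon\to0^+}\int_{\varepsilon\le|\theta|\le\pi/4}\beta(\theta)\int_{\mathbb R}[g(v'_* )f(v')-g(v_* )f(v)]dv_*d\theta$). *)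

theory Defs
  imports "HOL-Analysis.Analysis"
begin

definition schwartz :: "(real \<Rightarrow> real) \<Rightarrow> bool" where
  "schwartz f \<longleftrightarrow>
     (\<forall>n x. ((deriv ^^ n) f) differentiable (at x)) \<and>
     (\<forall>k n. \<exists>C. \<forall>x. \<bar>x\<bar> ^ k * \<bar>(deriv ^^ n) f x\<bar> \<le> C)"

definition angle_dom :: "real set" where
  "angle_dom = {-pi/4..pi/4} - {0}"

definition cross_section :: "real \<Rightarrow> (real \<Rightarrow> real) \<Rightarrow> bool" where
  "cross_section s \<beta> \<longleftrightarrow>
     (\<forall>\<theta>\<in>angle_dom. \<beta> (-\<theta>) = \<beta> \<theta>) \<and>
     (\<lambda>\<theta>. indicator angle_dom \<theta> * \<beta> \<theta>) \<in> borel_measurable lebesgue \<and>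
     (\<forall>\<theta>\<in>angle_dom. 0 \<le> \<beta> \<theta>) \<and>
     (\<forall>\<delta>>0. set_integrable lebesgue {\<theta>. \<delta> \<le> \<bar>\<theta>\<bar> \<and> \<bar>\<theta>\<bar> \<le> pi/4} \<beta>) \<and>
     (\<exists>c C \<delta>0. 0 < c \<and> 0 < C \<and> 0 < \<delta>0 \<and>
        (\<forall>\<theta>\<in>angle_dom. \<bar>\<theta>\<bar> < \<delta>0 \<longrightarrow>
            c * \<bar>\<theta>\<bar> powr (- 1 - 2 * s) \<le> \<beta> \<theta> \<and>
            \<beta> \<theta> \<le> C * \<bar>\<theta>\<bar> powr (- 1 - 2 * s)))"

definition even_part :: "(real \<Rightarrow> real) \<Rightarrow> real \<Rightarrow> real" where
  "even_part g v = (g v + g (-v)) / 2"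

definition kac_K :: "(real \<Rightarrow> real) \<Rightarrow> (real \<Rightarrow> real) \<Rightarrow> (real \<Rightarrow> real) \<Rightarrow> real \<Rightarrow> real" where
  "kac_K \<beta> g f v =
     (LINT \<theta>:angle_dom|lebesgue. \<beta> \<theta> *
        (LINT vs|lebesgue.
            even_part g (v * sin \<theta> + vs * cos \<theta>) * f (v * cos \<theta> - vs * sin \<theta>)
          - even_part g vs * f v))"

end

theory Submission
  imports Defs "HOL-Probability.Sinc_Integral"
begin

(* With G the even part of g, the substitution y = v sin(theta) + v_* cos(theta)
   in the inner integral of K turns v' into (v - y sin theta) / cos theta, so
     K(g,f)(v) = collision_integral 1 f v
               = int_theta beta(theta) * incr_integral 1 f theta v,
     incr_integral m h theta v = int_y G(y) * incr m h theta v y,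
     incr m h theta v y = h((v - y sin theta) / cos theta) / cos^m theta - h(v).
   A second order Taylor expansion in theta gives incr = -theta y h'(v) + R
   with |v|^k |R| <= D theta^2 (1 + |y|)^(k+2) for Schwartz h.  The first order
   term integrates to zero because G is even, hence
   |v|^k |incr_integral m h theta v| <= D' theta^2, and beta(theta) theta^2 is
   integrable because s < 1.  Differentiation in v gives
   (collision_integral m h)' = collision_integral (m+1) h', so all derivatives
   of K(g,f) are angular averages of the same kind and decay rapidly. *)

section \<open>Parametric integrals\<close>

lemma integral_tendsto_at_dominated:
  fixes F :: "real \<Rightarrow> 'a \<Rightarrow> real"
  assumes meas: "\<And>t. F t \<in> borel_measurable M" "L \<in> borel_measurable M"
    and w: "integrable M w"
    and lim: "\<And>x. x \<in> space M \<Longrightarrow> ((\<lambda>t. F t x) \<longlongrightarrow> L x) (at t0 within S)"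
    and bnd: "\<And>t x. t \<in> S \<Longrightarrow> x \<in> space M \<Longrightarrow> \<bar>F t x\<bar> \<le> w x"
  shows "((\<lambda>t. integral\<^sup>L M (F t)) \<longlongrightarrow> integral\<^sup>L M L) (at t0 within S)"
  unfolding tendsto_at_iff_sequentially
proof (intro allI impI)
  fix X :: "nat \<Rightarrow> real"
  assume X: "\<forall>i. X i \<in> S - {t0}" "X \<longlonglongrightarrow> t0"
  show "((\<lambda>t. integral\<^sup>L M (F t)) \<circ> X) \<longlonglongrightarrow> integral\<^sup>L M L"
    unfolding comp_def
  proof (rule integral_dominated_convergence[where w=w])
    show "AE x in M. (\<lambda>i. F (X i) x) \<longlonglongrightarrow> L x"
    proof (rule AE_I2)
      fix x assume x: "x \<in> space M"
      have "((\<lambda>t. F t x) \<circ> X) \<longlonglongrightarrow> L x"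
        using lim[OF x] X unfolding tendsto_at_iff_sequentially by blast
      then show "(\<lambda>i. F (X i) x) \<longlonglongrightarrow> L x" by (simp add: comp_def)
    qed
    show "AE x in M. norm (F (X i) x) \<le> w x" for i
      using bnd X(1) by (auto intro!: AE_I2)
  qed (use meas w in auto)
qed

text \<open>Differentiation under the integral sign, with a uniform integrable
  bound on the derivative of the integrand.  The difference quotients are
  dominated by the mean value theorem.\<close>
lemma DERIV_parametric_integral:
  fixes F F' :: "real \<Rightarrow> 'a \<Rightarrow> real"
  assumes int: "\<And>v. integrable M (F v)"
    and meas: "\<And>v. F' v \<in> borel_measurable M"
    and w: "integrable M w"
    and der: "\<And>x v. x \<in> space M \<Longrightarrow> ((\<lambda>v. F v x) has_real_derivative F' v x) (at v)"
    and bnd: "\<And>x v. x \<in> space M \<Longrightarrow> \<bar>F' v x\<bar> \<le> w x"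
  shows "((\<lambda>v. integral\<^sup>L M (F v)) has_real_derivative integral\<^sup>L M (F' v0)) (at v0)"
proof -
  define Q where "Q = (\<lambda>v x. (F v x - F v0 x) / (v - v0))"
  have "((\<lambda>v. integral\<^sup>L M (Q v)) \<longlongrightarrow> integral\<^sup>L M (F' v0)) (at v0 within UNIV)"
  proof (rule integral_tendsto_at_dominated[where w=w])
    show "Q t \<in> borel_measurable M" for t
      unfolding Q_def using int by (intro borel_measurable_divide borel_measurable_diff) auto
    show "x \<in> space M \<Longrightarrow> ((\<lambda>t. Q t x) \<longlongrightarrow> F' v0 x) (at v0 within UNIV)" for x
      using der[of x v0] unfolding Q_def has_field_derivative_iff by simp
    show "\<bar>Q t x\<bar> \<le> w x" if "x \<in> space M" for t x
    proof (cases "t = v0")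
      case True
      then show ?thesis using bnd[OF that, of 0] unfolding Q_def by auto
    next
      case False
      have "norm (F t x - F v0 x) \<le> w x * norm (t - v0)"
        by (rule field_differentiable_bound[where S=UNIV and f'="\<lambda>v. F' v x"])
           (use der[OF that] bnd[OF that] in \<open>auto simp: has_field_derivative_at_within\<close>)
      then show ?thesis using False unfolding Q_def
        by (simp add: abs_divide pos_divide_le_eq)
    qed
  qed (use meas w in auto)
  moreover have "integral\<^sup>L M (Q v) = (integral\<^sup>L M (F v) - integral\<^sup>L M (F v0)) / (v - v0)" for v
    unfolding Q_def using int by (simp add: integral_diff)
  ultimately show ?thesis unfolding has_field_derivative_iff by simp
qed

lemma integrable_quadratic_decay:
  fixes F :: "real \<Rightarrow> real"
  assumes "continuous_on UNIV F" "\<And>y. (1 + \<bar>y\<bar>)^2 * \<bar>F y\<bar> \<le> C"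
  shows "integrable lborel F"
proof (rule Bochner_Integration.integrable_bound)
  have "set_integrable lborel (einterval (-\<infinity>) \<infinity>) (\<lambda>x. inverse (1 + x^2))"
    by (rule integrable_inverse_1_plus_square)
  then have "integrable lborel (\<lambda>x. inverse (1 + x^2) :: real)"
    by (simp add: set_integrable_def)
  then show "integrable lborel (\<lambda>x. C * inverse (1 + x^2) :: real)" by simp
  show "F \<in> borel_measurable lborel"
    using assms(1) by (simp add: borel_measurable_continuous_onI)
  show "AE x in lborel. norm (F x) \<le> norm (C * inverse (1 + x^2))"
  proof (rule AE_I2)
    fix x :: real
    have C: "0 \<le> C" using assms(2)[of x] by (smt (verit) mult_nonneg_nonneg zero_le_power abs_ge_zero)
    have p: "0 < (1 + \<bar>x\<bar>)^2" by simp
    have "1 + x^2 \<le> (1 + \<bar>x\<bar>)^2" by (simp add: power2_eq_square algebra_simps)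
    have "\<bar>F x\<bar> \<le> C / (1 + \<bar>x\<bar>)^2" using assms(2)[of x] p by (simp add: field_simps mult.commute)
    also have "\<dots> \<le> C / (1 + x^2)"
      using C \<open>1 + x^2 \<le> _\<close> by (intro divide_left_mono) (auto simp: add_pos_nonneg)
    finally show "norm (F x) \<le> norm (C * inverse (1 + x^2))"
      using C by (simp add: divide_inverse add_nonneg_eq_0_iff)
  qed
qed

text \<open>The singularity |x|^a with a > -1 is integrable near the origin; this
  is where the restriction s < 1 on the cross section enters.\<close>
lemma integrable_abs_powr_near_0:
  assumes "a > (-1::real)"
  shows "integrable lebesgue (\<lambda>x. indicator {-1..1} x * \<bar>x\<bar> powr a)"
proof -
  have "(\<lambda>x. x powr a) integrable_on {0..1}"
    by (rule integrable_on_powr_from_0) (use assms in auto)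
  then have "(\<lambda>x. x powr a) absolutely_integrable_on {0..1}"
    by (intro nonnegative_absolutely_integrable_1) auto
  then have i0: "integrable lebesgue (\<lambda>x. indicator {0..1} x * x powr a)"
    by (simp add: set_integrable_def)
  have m0: "(\<lambda>x. indicator {0..1} x * x powr a) \<in> borel_measurable lborel" by measurable
  have i1: "integrable lborel (\<lambda>x. indicator {0..1} x * x powr a)"
    using i0 integrable_completion[OF m0] by simp
  have i2: "integrable lborel (\<lambda>x. indicator {0..1} (0 + -1 * x) * (0 + -1 * x) powr a)"
    by (rule lborel_integrable_real_affine[OF i1]) simp
  have i3: "integrable lborel (\<lambda>x. indicator {0..1} x * x powr a + indicator {0..1} (-x) * (-x) powr a)"
    using Bochner_Integration.integrable_add[OF i1 i2] by simp
  have i4: "integrable lborel (\<lambda>x. indicator {-1..1} x * \<bar>x\<bar> powr a)"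
  proof (rule Bochner_Integration.integrable_bound[OF i3])
    show "(\<lambda>x. indicator {-1..1} x * \<bar>x\<bar> powr a) \<in> borel_measurable lborel" by measurable
    show "AE x in lborel. norm (indicator {-1..1} x * \<bar>x\<bar> powr a :: real)
        \<le> norm (indicator {0..1} x * x powr a + indicator {0..1} (-x) * (-x) powr a :: real)"
      by (intro AE_I2) (auto simp: indicator_def)
  qed
  have m4: "(\<lambda>x. indicator {-1..1} x * \<bar>x\<bar> powr a) \<in> borel_measurable lborel" by measurable
  show ?thesis using i4 integrable_completion[OF m4] by simp
qed

section \<open>Rapidly decreasing functions\<close>

definition rapid :: "(real \<Rightarrow> real) \<Rightarrow> bool" where
  "rapid h \<longleftrightarrow> (\<forall>k. \<exists>C. \<forall>x. (1 + \<bar>x\<bar>)^k * \<bar>h x\<bar> \<le> C)"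

lemma rapidD: "rapid h \<Longrightarrow> \<exists>C. \<forall>x. (1 + \<bar>x\<bar>)^k * \<bar>h x\<bar> \<le> C"
  unfolding rapid_def by blast

lemma rapid_bounded: "rapid h \<Longrightarrow> \<exists>C. \<forall>x. \<bar>h x\<bar> \<le> C"
  using rapidD[of h 0] by auto

lemma one_plus_pow_le: "(0::real) \<le> a \<Longrightarrow> (1 + a)^k \<le> 2^k * (1 + a^k)"
proof (cases "a \<le> 1")
  case True
  assume "0 \<le> a"
  have "(1 + a)^k \<le> 2^k" using True \<open>0 \<le> a\<close> by (intro power_mono) auto
  also have "\<dots> \<le> 2^k * (1 + a^k)" using \<open>0 \<le> a\<close> by simp
  finally show ?thesis .
next
  case False
  assume "0 \<le> a"
  have "(1 + a)^k \<le> (2*a)^k" using False by (intro power_mono) auto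
  also have "\<dots> = 2^k * a^k" by (simp add: power_mult_distrib)
  also have "\<dots> \<le> 2^k * (1 + a^k)" by simp
  finally show ?thesis .
qed

lemma schwartz_rapid:
  assumes "schwartz h" shows "rapid h"
  unfolding rapid_def
proof
  fix k
  have "\<exists>C. \<forall>x. \<bar>x\<bar>^j * \<bar>h x\<bar> \<le> C" for j
    using assms unfolding schwartz_def by (metis funpow_0)
  then obtain C0 Ck where C0: "\<And>x. \<bar>x\<bar>^0 * \<bar>h x\<bar> \<le> C0" and Ck: "\<And>x. \<bar>x\<bar>^k * \<bar>h x\<bar> \<le> Ck"
    by meson
  show "\<exists>C. \<forall>x. (1 + \<bar>x\<bar>)^k * \<bar>h x\<bar> \<le> C"
  proof (intro exI allI)
    fix x
    have "(1 + \<bar>x\<bar>)^k * \<bar>h x\<bar> \<le> 2^k * (1 + \<bar>x\<bar>^k) * \<bar>h x\<bar>"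
      by (intro mult_right_mono one_plus_pow_le) auto
    also have "\<dots> = 2^k * (\<bar>x\<bar>^0 * \<bar>h x\<bar> + \<bar>x\<bar>^k * \<bar>h x\<bar>)"
      by (simp add: algebra_simps)
    also have "\<dots> \<le> 2^k * (C0 + Ck)" using C0[of x] Ck[of x] by (intro mult_left_mono) auto
    finally show "(1 + \<bar>x\<bar>)^k * \<bar>h x\<bar> \<le> 2^k * (C0 + Ck)" .
  qed
qed

lemma schwartz_deriv: assumes "schwartz h" shows "schwartz (deriv h)"
proof -
  have "\<And>n. (deriv^^n) (deriv h) = (deriv^^(Suc n)) h" by (simp only: funpow_Suc_right comp_def)
  then show ?thesis using assms unfolding schwartz_def by metis
qed

lemma schwartz_iterated_deriv: "schwartz h \<Longrightarrow> schwartz ((deriv^^n) h)"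
  by (induction n) (auto intro: schwartz_deriv)

lemma schwartz_has_deriv: "schwartz h \<Longrightarrow> DERIV h x :> deriv h x"
  unfolding schwartz_def using DERIV_deriv_iff_real_differentiable by (metis funpow_0)

lemma schwartz_continuous: "schwartz h \<Longrightarrow> continuous_on UNIV h"
  by (metis DERIV_isCont continuous_at_imp_continuous_on schwartz_has_deriv)

lemma even_part_rapid:
  assumes "rapid g" shows "rapid (even_part g)"
  unfolding rapid_def
proof
  fix k
  obtain C where C: "\<And>x. (1 + \<bar>x\<bar>)^k * \<bar>g x\<bar> \<le> C" using rapidD[OF assms] by blast
  show "\<exists>C. \<forall>x. (1 + \<bar>x\<bar>)^k * \<bar>even_part g x\<bar> \<le> C"
  proof (intro exI allI)
    fix x
    have e: "\<bar>even_part g x\<bar> \<le> (\<bar>g x\<bar> + \<bar>g (-x)\<bar>) / 2"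
      unfolding even_part_def by (simp add: abs_divide divide_right_mono abs_triangle_ineq)
    have "(1 + \<bar>x\<bar>)^k * \<bar>even_part g x\<bar> \<le> (1 + \<bar>x\<bar>)^k * ((\<bar>g x\<bar> + \<bar>g (-x)\<bar>) / 2)"
      by (rule mult_left_mono[OF e]) simp
    also have "\<dots> = ((1 + \<bar>x\<bar>)^k * \<bar>g x\<bar> + (1 + \<bar>-x\<bar>)^k * \<bar>g (-x)\<bar>) / 2"
      by (simp add: algebra_simps)
    also have "\<dots> \<le> C" using C[of x] C[of "-x"] by simp
    finally show "(1 + \<bar>x\<bar>)^k * \<bar>even_part g x\<bar> \<le> C" .
  qed
qed

lemma even_part_even: "even_part g (-x) = even_part g x"
  unfolding even_part_def by simp

lemma even_part_continuous:
  assumes "continuous_on UNIV g" shows "continuous_on UNIV (even_part g)"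
proof -
  have "continuous_on UNIV (\<lambda>x. g (-x))"
    by (rule continuous_on_compose2[OF assms]) (auto intro: continuous_intros)
  then show ?thesis unfolding even_part_def using assms by (intro continuous_intros) auto
qed

section \<open>Second order Taylor expansion in the angle\<close>

lemma taylor2_symmetric:
  fixes p0 p1 p2 :: "real \<Rightarrow> real"
  assumes d0: "\<And>t. \<bar>t\<bar> \<le> r \<Longrightarrow> DERIV p0 t :> p1 t"
    and d1: "\<And>t. \<bar>t\<bar> \<le> r \<Longrightarrow> DERIV p1 t :> p2 t"
    and th: "\<bar>\<theta>\<bar> \<le> r"
  shows "\<exists>t. \<bar>t\<bar> \<le> r \<and> p0 \<theta> = p0 0 + \<theta> * p1 0 + \<theta>\<^sup>2 / 2 * p2 t"
proof (cases "\<theta> = 0")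
  case True
  then show ?thesis using th by (intro exI[of _ 0]) auto
next
  case False
  define diff where "diff = (\<lambda>m::nat. if m = 0 then p0 else if m = 1 then p1 else p2)"
  have "\<exists>t. (if \<theta> < 0 then \<theta> < t \<and> t < 0 else 0 < t \<and> t < \<theta>) \<and>
    p0 \<theta> = (\<Sum>m<2. (diff m 0 / fact m) * (\<theta> - 0)^m) + (diff 2 t / fact 2) * (\<theta> - 0)^2"
  proof (rule Taylor[where a="-r" and b="r"])
    show "\<forall>m t. m < 2 \<and> - r \<le> t \<and> t \<le> r \<longrightarrow> DERIV (diff m) t :> diff (Suc m) t"
    proof (intro allI impI)
      fix m t assume a: "m < (2::nat) \<and> - r \<le> t \<and> t \<le> r"
      then have "m = 0 \<or> m = 1" "\<bar>t\<bar> \<le> r" by auto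
      then show "DERIV (diff m) t :> diff (Suc m) t"
        using d0 d1 by (auto simp: diff_def)
    qed
  qed (use th False in \<open>auto simp: diff_def\<close>)
  then obtain t where t: "\<bar>t\<bar> \<le> \<bar>\<theta>\<bar>"
    and eq: "p0 \<theta> = (\<Sum>m<2. (diff m 0 / fact m) * (\<theta> - 0)^m) + (diff 2 t / fact 2) * (\<theta> - 0)^2"
    by (smt (verit))
  have "(\<Sum>m<2. (diff m 0 / fact m) * (\<theta> - 0)^m) = p0 0 + p1 0 * \<theta>"
    by (simp add: diff_def numeral_2_eq_2)
  with eq have "p0 \<theta> = p0 0 + \<theta> * p1 0 + \<theta>\<^sup>2 / 2 * p2 t"
    by (simp add: diff_def)
  then show ?thesis using t th by (intro exI[of _ t]) auto
qed

lemma taylor2_product_composition: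
  fixes S0 S1 S2 A0 A1 A2 h h1 h2 :: "real \<Rightarrow> real"
  assumes dS0: "\<And>t. \<bar>t\<bar> \<le> r \<Longrightarrow> DERIV S0 t :> S1 t"
    and dS1: "\<And>t. \<bar>t\<bar> \<le> r \<Longrightarrow> DERIV S1 t :> S2 t"
    and dA0: "\<And>t. \<bar>t\<bar> \<le> r \<Longrightarrow> DERIV A0 t :> A1 t"
    and dA1: "\<And>t. \<bar>t\<bar> \<le> r \<Longrightarrow> DERIV A1 t :> A2 t"
    and dh: "\<And>x. DERIV h x :> h1 x" and dh1: "\<And>x. DERIV h1 x :> h2 x"
    and th: "\<bar>\<theta>\<bar> \<le> r"
  shows "\<exists>t. \<bar>t\<bar> \<le> r \<and> S0 \<theta> * h (A0 \<theta>) = S0 0 * h (A0 0)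
     + \<theta> * (S1 0 * h (A0 0) + S0 0 * h1 (A0 0) * A1 0)
     + \<theta>\<^sup>2 / 2 * (S2 t * h (A0 t) + 2 * S1 t * h1 (A0 t) * A1 t
          + S0 t * h2 (A0 t) * (A1 t)\<^sup>2 + S0 t * h1 (A0 t) * A2 t)"
proof (rule taylor2_symmetric[OF _ _ th])
  fix t assume t: "\<bar>t\<bar> \<le> r"
  have c0: "DERIV (\<lambda>t. h (A0 t)) t :> h1 (A0 t) * A1 t"
    by (rule DERIV_chain2[OF dh dA0[OF t]])
  have c1: "DERIV (\<lambda>t. h1 (A0 t)) t :> h2 (A0 t) * A1 t"
    by (rule DERIV_chain2[OF dh1 dA0[OF t]])
  show "DERIV (\<lambda>t. S0 t * h (A0 t)) t :> S1 t * h (A0 t) + S0 t * h1 (A0 t) * A1 t"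
    using DERIV_mult[OF dS0[OF t] c0] by (rule DERIV_cong) (simp add: algebra_simps)
  show "DERIV (\<lambda>t. S1 t * h (A0 t) + S0 t * h1 (A0 t) * A1 t) t :>
      S2 t * h (A0 t) + 2 * S1 t * h1 (A0 t) * A1 t
        + S0 t * h2 (A0 t) * (A1 t)\<^sup>2 + S0 t * h1 (A0 t) * A2 t"
    using DERIV_add[OF DERIV_mult[OF dS1[OF t] c0] DERIV_mult[OF DERIV_mult[OF dS0[OF t] c1] dA1[OF t]]]
    by (rule DERIV_cong) (simp add: algebra_simps power2_eq_square)
qed

section \<open>Elementary estimates for angles in [-pi/4, pi/4]\<close>

lemma small_angle_trig_bounds:
  fixes t :: real assumes "\<bar>t\<bar> \<le> pi/4"
  shows "1/2 \<le> cos t" "cos t \<le> 1" "\<bar>sin t\<bar> \<le> cos t" "\<bar>sin t\<bar> \<le> 1"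
proof -
  have c0: "0 \<le> cos t" using assms by (intro cos_ge_zero) auto
  have "0 \<le> cos (2*t)" using assms by (intro cos_ge_zero) auto
  then have sc: "(sin t)\<^sup>2 \<le> (cos t)\<^sup>2" by (simp add: cos_double)
  then show "\<bar>sin t\<bar> \<le> cos t" using c0 by (metis power2_abs power2_le_imp_le)
  have "1/2 \<le> (cos t)\<^sup>2" using sc sin_cos_squared_add[of t] by linarith
  then have "(1/2)\<^sup>2 \<le> (cos t)\<^sup>2" by (simp add: power2_eq_square)
  then show "1/2 \<le> cos t" using c0 by (rule power2_le_imp_le)
  show "cos t \<le> 1" by simp
  show "\<bar>sin t\<bar> \<le> 1" by simp
qed

lemma inverse_power_le:
  assumes "1/2 \<le> (c::real)" shows "1 / c^m \<le> 2^m"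
proof -
  have "(1/2)^m \<le> c^m" using assms by (intro power_mono) auto
  moreover have "0 < c" using assms by simp
  ultimately have "1 / c^m \<le> 1 / (1/2)^m" by (intro divide_left_mono) auto
  then show ?thesis by (simp add: power_one_over)
qed

lemma inverse_cos_power_le: "\<bar>t\<bar> \<le> pi/4 \<Longrightarrow> 1 / \<bar>cos t\<bar>^n \<le> 2^n"
  using inverse_power_le small_angle_trig_bounds(1)[of t] by simp

lemma pow_pred_mult: "0 < m \<Longrightarrow> (x::real) * x ^ (m - Suc 0) = x ^ m"
  by (cases m) auto

lemma DERIV_sec_power:
  assumes "cos t \<noteq> 0"
  shows "DERIV (\<lambda>t. 1 / cos t ^ m) t :> real m * sin t / cos t ^ (m+1)"
  using assms by (auto intro!: derivative_eq_intros simp: field_simps power_Suc pow_pred_mult)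

lemma DERIV_sec_power_deriv:
  assumes "cos t \<noteq> 0"
  shows "DERIV (\<lambda>t. real m * sin t / cos t ^ (m+1)) t :>
    real m * ((cos t)\<^sup>2 + (real m + 1) * (sin t)\<^sup>2) / cos t ^ (m+2)"
  using assms
  by (auto intro!: derivative_eq_intros simp: field_simps power_Suc power2_eq_square pow_pred_mult)

lemma DERIV_rotated_arg:
  assumes "cos t \<noteq> 0"
  shows "DERIV (\<lambda>t. (v - y * sin t) / cos t) t :> (v * sin t - y) / (cos t)\<^sup>2"
  using assms apply (auto intro!: derivative_eq_intros simp: field_simps power2_eq_square)
  by (metis distrib_left mult.right_neutral sin_cos_squared_add3)

lemma DERIV_rotated_arg_deriv:
  assumes "cos t \<noteq> 0"
  shows "DERIV (\<lambda>t. (v * sin t - y) / (cos t)\<^sup>2) t :>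
    (v * (cos t)\<^sup>2 + 2 * sin t * (v * sin t - y)) / cos t ^ 3"
  using assms by (auto intro!: derivative_eq_intros simp: field_simps power2_eq_square power3_eq_cube)

definition sec_bound :: "nat \<Rightarrow> real" where
  "sec_bound m = 2^m * (real m + 1) * (real m + 2)"

lemma sec_power_derivative_bounds:
  fixes c sn :: real
  assumes c: "1/2 \<le> c" "c \<le> 1" and s: "\<bar>sn\<bar> \<le> c"
  shows "\<bar>1 / c^m\<bar> \<le> sec_bound m" "\<bar>real m * sn / c^(m+1)\<bar> \<le> sec_bound m"
    "\<bar>real m * (c\<^sup>2 + (real m + 1) * sn\<^sup>2) / c^(m+2)\<bar> \<le> sec_bound m"
proof -
  have cp: "0 < c" using c by auto
  note I = inverse_power_le[OF c(1), of m]
  have "(2::real)^m * 1 * 1 \<le> 2^m * (real m + 1) * (real m + 2)"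
    by (intro mult_mono) auto
  then have M1: "2^m \<le> sec_bound m" by (simp add: sec_bound_def)
  show "\<bar>1 / c^m\<bar> \<le> sec_bound m" using I M1 cp by simp
  have q: "\<bar>sn\<bar> / c \<le> 1" using s cp by simp
  have "\<bar>real m * sn / c^(m+1)\<bar> = real m * (\<bar>sn\<bar> / c) * (1 / c^m)"
    using cp by (simp add: abs_mult)
  also have "\<dots> \<le> real m * 1 * 2^m"
    using q I cp by (intro mult_mono) auto
  also have "\<dots> \<le> (real m + 1) * (real m + 2) * 2^m"
    by (intro mult_right_mono mult_mono) auto
  also have "\<dots> = sec_bound m" unfolding sec_bound_def by (simp add: algebra_simps)
  finally show "\<bar>real m * sn / c^(m+1)\<bar> \<le> sec_bound m" .
  have sq: "sn\<^sup>2 \<le> c\<^sup>2" using s by (metis abs_ge_zero power2_abs power_mono)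
  have q2: "(c\<^sup>2 + (real m + 1) * sn\<^sup>2) / c\<^sup>2 \<le> real m + 2"
  proof -
    have "c\<^sup>2 + (real m + 1) * sn\<^sup>2 \<le> c\<^sup>2 + (real m + 1) * c\<^sup>2"
      using sq by (intro add_left_mono mult_left_mono) auto
    also have "\<dots> = (real m + 2) * c\<^sup>2" by (simp add: algebra_simps)
    finally show ?thesis using cp by (simp add: divide_le_eq)
  qed
  have nn: "0 \<le> (c\<^sup>2 + (real m + 1) * sn\<^sup>2) / c\<^sup>2" by simp
  have "\<bar>real m * (c\<^sup>2 + (real m + 1) * sn\<^sup>2) / c^(m+2)\<bar>
      = real m * ((c\<^sup>2 + (real m + 1) * sn\<^sup>2) / c\<^sup>2) * (1 / c^m)"
    using cp by (simp add: abs_mult power_add add_nonneg_nonneg power2_eq_square)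
  also have "\<dots> \<le> real m * (real m + 2) * 2^m"
    using q2 I nn cp by (intro mult_mono) auto
  also have "\<dots> \<le> (real m + 1) * (real m + 2) * 2^m"
    by (intro mult_right_mono) auto
  also have "\<dots> = sec_bound m" unfolding sec_bound_def by (simp add: algebra_simps)
  finally show "\<bar>real m * (c\<^sup>2 + (real m + 1) * sn\<^sup>2) / c^(m+2)\<bar> \<le> sec_bound m" .
qed

text \<open>Bounds for the first two t-derivatives of the rotated argument, and the
  inequality |v| <= |A(t)| + |y| used to transfer decay from A(t) to v.\<close>
lemma rotated_arg_bounds:
  fixes c sn v y :: real
  assumes c: "1/2 \<le> c" "c \<le> 1" and s: "\<bar>sn\<bar> \<le> c" "\<bar>sn\<bar> \<le> 1"
  shows "\<bar>(v * sn - y) / c\<^sup>2\<bar> \<le> 4 * (1 + \<bar>v\<bar> + \<bar>y\<bar>)"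
    "\<bar>(v * c\<^sup>2 + 2 * sn * (v * sn - y)) / c^3\<bar> \<le> 24 * (1 + \<bar>v\<bar> + \<bar>y\<bar>)"
    "\<bar>v\<bar> \<le> \<bar>(v - y * sn) / c\<bar> + \<bar>y\<bar>"
proof -
  have cp: "0 < c" using c by auto
  have n1: "\<bar>v * sn - y\<bar> \<le> \<bar>v\<bar> + \<bar>y\<bar>"
  proof -
    have "\<bar>v * sn\<bar> \<le> \<bar>v\<bar>" using s(2) by (simp add: abs_mult mult_left_le)
    then show ?thesis by linarith
  qed
  have i2: "1 / c\<^sup>2 \<le> 4" and i3: "1 / c^3 \<le> 8"
    using inverse_power_le[OF c(1), of 2] inverse_power_le[OF c(1), of 3] by auto
  have "\<bar>(v * sn - y) / c\<^sup>2\<bar> = \<bar>v * sn - y\<bar> * (1 / c\<^sup>2)" by (simp add: abs_divide)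
  also have "\<dots> \<le> (\<bar>v\<bar> + \<bar>y\<bar>) * 4" using n1 i2 cp by (intro mult_mono) auto
  finally show "\<bar>(v * sn - y) / c\<^sup>2\<bar> \<le> 4 * (1 + \<bar>v\<bar> + \<bar>y\<bar>)" by simp
  have n2: "\<bar>v * c\<^sup>2 + 2 * sn * (v * sn - y)\<bar> \<le> 3 * (\<bar>v\<bar> + \<bar>y\<bar>)"
  proof -
    have "c\<^sup>2 \<le> 1" using c cp by (simp add: power_le_one)
    then have a: "\<bar>v * c\<^sup>2\<bar> \<le> \<bar>v\<bar>" by (simp add: abs_mult mult_left_le)
    have "\<bar>2 * sn * (v * sn - y)\<bar> = 2 * \<bar>sn\<bar> * \<bar>v * sn - y\<bar>" by (simp add: abs_mult)
    also have "\<dots> \<le> 2 * 1 * (\<bar>v\<bar> + \<bar>y\<bar>)" using s(2) n1 by (intro mult_mono) auto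
    finally have b: "\<bar>2 * sn * (v * sn - y)\<bar> \<le> 2 * (\<bar>v\<bar> + \<bar>y\<bar>)" by simp
    have "\<bar>v * c\<^sup>2 + 2 * sn * (v * sn - y)\<bar> \<le> \<bar>v * c\<^sup>2\<bar> + \<bar>2 * sn * (v * sn - y)\<bar>"
      by (rule abs_triangle_ineq)
    also have "\<dots> \<le> \<bar>v\<bar> + 2 * (\<bar>v\<bar> + \<bar>y\<bar>)" by (rule add_mono[OF a b])
    also have "\<dots> \<le> 3 * (\<bar>v\<bar> + \<bar>y\<bar>)" by simp
    finally show ?thesis .
  qed
  have "\<bar>(v * c\<^sup>2 + 2 * sn * (v * sn - y)) / c^3\<bar> = \<bar>v * c\<^sup>2 + 2 * sn * (v * sn - y)\<bar> * (1 / c^3)"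
    using cp by (simp add: abs_divide)
  also have "\<dots> \<le> (3 * (\<bar>v\<bar> + \<bar>y\<bar>)) * 8" using n2 i3 cp by (intro mult_mono) auto
  finally show "\<bar>(v * c\<^sup>2 + 2 * sn * (v * sn - y)) / c^3\<bar> \<le> 24 * (1 + \<bar>v\<bar> + \<bar>y\<bar>)" by simp
  have "v = c * ((v - y * sn) / c) + y * sn" using cp by (simp add: field_simps)
  then have "\<bar>v\<bar> \<le> \<bar>c * ((v - y * sn) / c)\<bar> + \<bar>y * sn\<bar>" by (metis abs_triangle_ineq)
  also have "\<bar>c * ((v - y * sn) / c)\<bar> \<le> \<bar>(v - y * sn) / c\<bar>"
  proof -
    have "\<bar>c * ((v - y * sn) / c)\<bar> = c * \<bar>(v - y * sn) / c\<bar>" using cp by (simp add: abs_mult)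
    also have "\<dots> \<le> 1 * \<bar>(v - y * sn) / c\<bar>" using c by (intro mult_right_mono) auto
    finally show ?thesis by simp
  qed
  also have "\<bar>y * sn\<bar> \<le> \<bar>y\<bar>" using s(2) by (simp add: abs_mult mult_left_le)
  finally show "\<bar>v\<bar> \<le> \<bar>(v - y * sn) / c\<bar> + \<bar>y\<bar>" by simp
qed

lemma second_derivative_term_bound:
  fixes M R :: real
  assumes "\<bar>S0\<bar> \<le> M" "\<bar>S1\<bar> \<le> M" "\<bar>S2\<bar> \<le> M" "\<bar>A1\<bar> \<le> 4*R" "\<bar>A2\<bar> \<le> 24*R" "1 \<le> R"
  shows "\<bar>S2 * a + 2 * S1 * b * A1 + S0 * c * A1\<^sup>2 + S0 * b * A2\<bar> \<le> 48 * M * R\<^sup>2 * (\<bar>a\<bar> + \<bar>b\<bar> + \<bar>c\<bar>)"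
proof -
  have M: "0 \<le> M" using assms(1) by linarith
  have "1 * R \<le> R * R" by (rule mult_right_mono) (use assms(6) in auto)
  then have "R \<le> R * R" by simp
  then have R2: "R \<le> R\<^sup>2" "1 \<le> R\<^sup>2" unfolding power2_eq_square using assms(6) by linarith+
  have MR: "M * R \<le> M * R\<^sup>2" "M \<le> M * R\<^sup>2"
    using mult_left_mono[OF R2(1) M] mult_left_mono[OF R2(2) M] by simp_all
  have MR': "M * R * \<bar>z\<bar> \<le> M * R\<^sup>2 * \<bar>z\<bar>" "M * \<bar>z\<bar> \<le> M * R\<^sup>2 * \<bar>z\<bar>" for z
    using mult_right_mono[OF MR(1), of "\<bar>z\<bar>"] mult_right_mono[OF MR(2), of "\<bar>z\<bar>"] by simp_all
  have t1: "\<bar>S2 * a\<bar> \<le> M * R\<^sup>2 * \<bar>a\<bar>"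
  proof -
    have "\<bar>S2 * a\<bar> \<le> M * \<bar>a\<bar>" by (simp add: abs_mult assms(3) mult_right_mono)
    also have "\<dots> \<le> M * R\<^sup>2 * \<bar>a\<bar>" by (rule MR'(2))
    finally show ?thesis .
  qed
  have t2: "\<bar>2 * S1 * b * A1\<bar> \<le> 8 * M * R\<^sup>2 * \<bar>b\<bar>"
  proof -
    have "\<bar>2 * S1 * b * A1\<bar> = 2 * \<bar>S1\<bar> * \<bar>A1\<bar> * \<bar>b\<bar>" by (simp add: abs_mult)
    also have "\<dots> \<le> 2 * M * (4 * R) * \<bar>b\<bar>" using assms M
      by (intro mult_right_mono mult_mono) auto
    also have "\<dots> = 8 * (M * R * \<bar>b\<bar>)" by simp
    also have "\<dots> \<le> 8 * M * R\<^sup>2 * \<bar>b\<bar>" using MR'(1)[of b] by simp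
    finally show ?thesis .
  qed
  have t3: "\<bar>S0 * c * A1\<^sup>2\<bar> \<le> 16 * M * R\<^sup>2 * \<bar>c\<bar>"
  proof -
    have "\<bar>A1\<bar>\<^sup>2 \<le> (4*R)\<^sup>2" using assms(4) by (intro power_mono) auto
    then have "\<bar>A1\<^sup>2\<bar> \<le> (4*R)\<^sup>2" by simp
    then have "\<bar>A1\<^sup>2\<bar> \<le> 16 * R\<^sup>2" by (simp add: power_mult_distrib)
    have "\<bar>S0 * c * A1\<^sup>2\<bar> = \<bar>S0\<bar> * \<bar>A1\<^sup>2\<bar> * \<bar>c\<bar>" by (simp add: abs_mult)
    also have "\<dots> \<le> M * (16 * R\<^sup>2) * \<bar>c\<bar>" using assms M \<open>\<bar>A1\<^sup>2\<bar> \<le> 16 * R\<^sup>2\<close>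
      by (intro mult_right_mono mult_mono) auto
    finally show ?thesis by simp
  qed
  have t4: "\<bar>S0 * b * A2\<bar> \<le> 24 * M * R\<^sup>2 * \<bar>b\<bar>"
  proof -
    have "\<bar>S0 * b * A2\<bar> = \<bar>S0\<bar> * \<bar>A2\<bar> * \<bar>b\<bar>" by (simp add: abs_mult)
    also have "\<dots> \<le> M * (24 * R) * \<bar>b\<bar>" using assms M
      by (intro mult_right_mono mult_mono) auto
    also have "\<dots> = 24 * (M * R * \<bar>b\<bar>)" by simp
    also have "\<dots> \<le> 24 * M * R\<^sup>2 * \<bar>b\<bar>" using MR'(1)[of b] by simp
    finally show ?thesis .
  qed
  have "0 \<le> M * R\<^sup>2 * \<bar>a\<bar>" "0 \<le> M * R\<^sup>2 * \<bar>b\<bar>" "0 \<le> M * R\<^sup>2 * \<bar>c\<bar>" using M by auto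
  moreover have "\<bar>S2 * a + 2 * S1 * b * A1 + S0 * c * A1\<^sup>2 + S0 * b * A2\<bar>
      \<le> \<bar>S2 * a\<bar> + \<bar>2 * S1 * b * A1\<bar> + \<bar>S0 * c * A1\<^sup>2\<bar> + \<bar>S0 * b * A2\<bar>" by arith
  moreover have "48 * M * R\<^sup>2 * (\<bar>a\<bar> + \<bar>b\<bar> + \<bar>c\<bar>)
      = 48 * (M * R\<^sup>2 * \<bar>a\<bar>) + 48 * (M * R\<^sup>2 * \<bar>b\<bar>) + 48 * (M * R\<^sup>2 * \<bar>c\<bar>)"
    by (simp add: algebra_simps)
  ultimately show ?thesis using t1 t2 t3 t4 by linarith
qed

lemma weight_transfer:
  fixes v a y :: real
  assumes "\<bar>v\<bar> \<le> \<bar>a\<bar> + \<bar>y\<bar>"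
  shows "\<bar>v\<bar>^k * (1 + \<bar>v\<bar> + \<bar>y\<bar>)\<^sup>2 \<le> 2^(k+2) * ((1 + \<bar>a\<bar>)^(k+2) * (1 + \<bar>y\<bar>)^(k+2))"
proof -
  have "\<bar>v\<bar>^k \<le> (1 + \<bar>v\<bar> + \<bar>y\<bar>)^k" by (intro power_mono) auto
  then have "\<bar>v\<bar>^k * (1 + \<bar>v\<bar> + \<bar>y\<bar>)\<^sup>2 \<le> (1 + \<bar>v\<bar> + \<bar>y\<bar>)^k * (1 + \<bar>v\<bar> + \<bar>y\<bar>)\<^sup>2"
    by (intro mult_right_mono) auto
  also have "\<dots> = (1 + \<bar>v\<bar> + \<bar>y\<bar>)^(k+2)" by (simp only: power_add)
  also have "\<dots> \<le> (2 * (1 + \<bar>a\<bar>) * (1 + \<bar>y\<bar>))^(k+2)"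
  proof (intro power_mono)
    have "0 \<le> \<bar>a\<bar> * \<bar>y\<bar>" by simp
    moreover have "2 * (1 + \<bar>a\<bar>) * (1 + \<bar>y\<bar>) = 2 + 2*\<bar>a\<bar> + 2*\<bar>y\<bar> + 2*(\<bar>a\<bar> * \<bar>y\<bar>)"
      by (simp add: algebra_simps)
    ultimately show "1 + \<bar>v\<bar> + \<bar>y\<bar> \<le> 2 * (1 + \<bar>a\<bar>) * (1 + \<bar>y\<bar>)" using assms by linarith
  qed auto
  also have "\<dots> = 2^(k+2) * ((1 + \<bar>a\<bar>)^(k+2) * (1 + \<bar>y\<bar>)^(k+2))" by (simp only: power_mult_distrib mult.assoc)
  finally show ?thesis .
qed

section \<open>The kernel increment and its second order estimate\<close>

text \<open>After the change of variables y = v sin(theta) + v_* cos(theta), the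
  collision kernel applied to h becomes G(y) * incr m h theta v y (with m = 1);
  the weight 1/cos^m appears when differentiating in v.\<close>
definition incr :: "nat \<Rightarrow> (real \<Rightarrow> real) \<Rightarrow> real \<Rightarrow> real \<Rightarrow> real \<Rightarrow> real" where
  "incr m h \<theta> v y = h ((v - y * sin \<theta>) / cos \<theta>) / cos \<theta> ^ m - h v"

lemma incr_taylor_remainder:
  assumes dh: "\<And>x. DERIV h x :> h1 x" and dh1: "\<And>x. DERIV h1 x :> h2 x"
    and th: "\<bar>\<theta>\<bar> \<le> pi/4"
  obtains t where "\<bar>t\<bar> \<le> pi/4"
    "\<bar>incr m h \<theta> v y + \<theta> * y * h1 v\<bar> \<le> \<theta>\<^sup>2 * (24 * sec_bound m * (1 + \<bar>v\<bar> + \<bar>y\<bar>)\<^sup>2 *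
       (\<bar>h ((v - y * sin t) / cos t)\<bar> + \<bar>h1 ((v - y * sin t) / cos t)\<bar> + \<bar>h2 ((v - y * sin t) / cos t)\<bar>))"
proof -
  define S0 where "S0 = (\<lambda>t::real. 1 / cos t ^ m)"
  define S1 where "S1 = (\<lambda>t::real. real m * sin t / cos t ^ (m+1))"
  define S2 where "S2 = (\<lambda>t::real. real m * ((cos t)\<^sup>2 + (real m + 1) * (sin t)\<^sup>2) / cos t ^ (m+2))"
  define A0 where "A0 = (\<lambda>t::real. (v - y * sin t) / cos t)"
  define A1 where "A1 = (\<lambda>t::real. (v * sin t - y) / (cos t)\<^sup>2)"
  define A2 where "A2 = (\<lambda>t::real. (v * (cos t)\<^sup>2 + 2 * sin t * (v * sin t - y)) / cos t ^ 3)"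
  have cne: "cos t \<noteq> 0" if "\<bar>t\<bar> \<le> pi/4" for t
    using small_angle_trig_bounds(1)[OF that] by auto
  obtain t where t: "\<bar>t\<bar> \<le> pi/4" and eq: "S0 \<theta> * h (A0 \<theta>) = S0 0 * h (A0 0)
     + \<theta> * (S1 0 * h (A0 0) + S0 0 * h1 (A0 0) * A1 0)
     + \<theta>\<^sup>2 / 2 * (S2 t * h (A0 t) + 2 * S1 t * h1 (A0 t) * A1 t
          + S0 t * h2 (A0 t) * (A1 t)\<^sup>2 + S0 t * h1 (A0 t) * A2 t)"
    using taylor2_product_composition[of "pi/4" S0 S1 S2 A0 A1 A2 h h1 h2 \<theta>, OF _ _ _ _ dh dh1 th]
    unfolding S0_def S1_def S2_def A0_def A1_def A2_def
    using DERIV_sec_power[OF cne] DERIV_sec_power_deriv[OF cne]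
      DERIV_rotated_arg[OF cne] DERIV_rotated_arg_deriv[OF cne] by blast
  define P where "P = S2 t * h (A0 t) + 2 * S1 t * h1 (A0 t) * A1 t
        + S0 t * h2 (A0 t) * (A1 t)\<^sup>2 + S0 t * h1 (A0 t) * A2 t"
  have expansion: "incr m h \<theta> v y + \<theta> * y * h1 v = \<theta>\<^sup>2 / 2 * P"
    using eq unfolding P_def incr_def
    by (simp add: S0_def S1_def A0_def A1_def algebra_simps)
  note tb = small_angle_trig_bounds[OF t]
  have "\<bar>P\<bar> \<le> 48 * sec_bound m * (1 + \<bar>v\<bar> + \<bar>y\<bar>)\<^sup>2 * (\<bar>h (A0 t)\<bar> + \<bar>h1 (A0 t)\<bar> + \<bar>h2 (A0 t)\<bar>)"
    unfolding P_def
  proof (rule second_derivative_term_bound)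
    show "\<bar>S0 t\<bar> \<le> sec_bound m" "\<bar>S1 t\<bar> \<le> sec_bound m" "\<bar>S2 t\<bar> \<le> sec_bound m"
      using sec_power_derivative_bounds[OF tb(1,2,3), of m] unfolding S0_def S1_def S2_def by auto
    show "\<bar>A1 t\<bar> \<le> 4 * (1 + \<bar>v\<bar> + \<bar>y\<bar>)" "\<bar>A2 t\<bar> \<le> 24 * (1 + \<bar>v\<bar> + \<bar>y\<bar>)"
      using rotated_arg_bounds[OF tb, of v y] unfolding A1_def A2_def by auto
  qed simp
  then have "\<theta>\<^sup>2 / 2 * \<bar>P\<bar> \<le> \<theta>\<^sup>2 / 2 * (48 * sec_bound m * (1 + \<bar>v\<bar> + \<bar>y\<bar>)\<^sup>2 *
      (\<bar>h (A0 t)\<bar> + \<bar>h1 (A0 t)\<bar> + \<bar>h2 (A0 t)\<bar>))"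
    by (rule mult_left_mono) simp
  then have "\<bar>incr m h \<theta> v y + \<theta> * y * h1 v\<bar> \<le> \<theta>\<^sup>2 * (24 * sec_bound m * (1 + \<bar>v\<bar> + \<bar>y\<bar>)\<^sup>2 *
      (\<bar>h (A0 t)\<bar> + \<bar>h1 (A0 t)\<bar> + \<bar>h2 (A0 t)\<bar>))"
    unfolding expansion by (simp add: abs_mult mult_ac)
  then show ?thesis unfolding A0_def by (rule that[OF t])
qed

lemma incr_second_order_estimate:
  assumes h: "schwartz h"
  shows "\<exists>D. \<forall>\<theta> v y. \<bar>\<theta>\<bar> \<le> pi/4 \<longrightarrow>
     \<bar>v\<bar>^k * \<bar>incr m h \<theta> v y + \<theta> * y * deriv h v\<bar> \<le> D * \<theta>\<^sup>2 * (1 + \<bar>y\<bar>)^(k+2)"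
proof -
  define h1 where "h1 = deriv h"
  define h2 where "h2 = deriv h1"
  have dh: "\<And>x. DERIV h x :> h1 x" using schwartz_has_deriv[OF h] by (simp add: h1_def)
  have dh1: "\<And>x. DERIV h1 x :> h2 x"
    using schwartz_has_deriv[OF schwartz_deriv[OF h]] by (simp add: h1_def h2_def)
  define H where "H = (\<lambda>x. \<bar>h x\<bar> + \<bar>h1 x\<bar> + \<bar>h2 x\<bar>)"
  have "rapid h" "rapid h1" "rapid h2"
    unfolding h1_def h2_def by (intro schwartz_rapid schwartz_deriv h)+
  then obtain C0 C1 C2 where "\<And>x. (1 + \<bar>x\<bar>)^(k+2) * \<bar>h x\<bar> \<le> C0"
    "\<And>x. (1 + \<bar>x\<bar>)^(k+2) * \<bar>h1 x\<bar> \<le> C1" "\<And>x. (1 + \<bar>x\<bar>)^(k+2) * \<bar>h2 x\<bar> \<le> C2"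
    using rapidD by metis
  then have CH: "(1 + \<bar>x\<bar>)^(k+2) * H x \<le> C0 + C1 + C2" for x
    unfolding H_def by (simp add: distrib_left add_mono)
  define D where "D = 24 * sec_bound m * 2^(k+2) * (C0 + C1 + C2)"
  show ?thesis
  proof (intro exI[of _ D] allI impI)
    fix \<theta> v y :: real
    assume th: "\<bar>\<theta>\<bar> \<le> pi/4"
    obtain t where t: "\<bar>t\<bar> \<le> pi/4" and rem: "\<bar>incr m h \<theta> v y + \<theta> * y * h1 v\<bar>
        \<le> \<theta>\<^sup>2 * (24 * sec_bound m * (1 + \<bar>v\<bar> + \<bar>y\<bar>)\<^sup>2 * H ((v - y * sin t) / cos t))"
      using incr_taylor_remainder[OF dh dh1 th] unfolding H_def by blast
    define a where "a = (v - y * sin t) / cos t"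
    have M0: "0 \<le> sec_bound m" by (simp add: sec_bound_def)
    have H0: "0 \<le> H a" by (simp add: H_def)
    have W: "\<bar>v\<bar>^k * (1 + \<bar>v\<bar> + \<bar>y\<bar>)\<^sup>2 \<le> 2^(k+2) * ((1 + \<bar>a\<bar>)^(k+2) * (1 + \<bar>y\<bar>)^(k+2))"
      unfolding a_def by (rule weight_transfer[OF rotated_arg_bounds(3)[OF small_angle_trig_bounds[OF t]]])
    have "\<bar>v\<bar>^k * \<bar>incr m h \<theta> v y + \<theta> * y * h1 v\<bar>
        \<le> 24 * sec_bound m * \<theta>\<^sup>2 * H a * (\<bar>v\<bar>^k * (1 + \<bar>v\<bar> + \<bar>y\<bar>)\<^sup>2)"
      using mult_left_mono[OF rem, of "\<bar>v\<bar>^k"] by (simp add: a_def mult_ac)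
    also have "\<dots> \<le> 24 * sec_bound m * \<theta>\<^sup>2 * H a * (2^(k+2) * ((1 + \<bar>a\<bar>)^(k+2) * (1 + \<bar>y\<bar>)^(k+2)))"
      using W M0 H0 by (intro mult_left_mono) auto
    also have "\<dots> = 24 * sec_bound m * 2^(k+2) * \<theta>\<^sup>2 * (1 + \<bar>y\<bar>)^(k+2) * ((1 + \<bar>a\<bar>)^(k+2) * H a)"
      by (simp add: mult_ac)
    also have "\<dots> \<le> 24 * sec_bound m * 2^(k+2) * \<theta>\<^sup>2 * (1 + \<bar>y\<bar>)^(k+2) * (C0 + C1 + C2)"
      using CH[of a] M0 by (intro mult_left_mono) auto
    also have "\<dots> = D * \<theta>\<^sup>2 * (1 + \<bar>y\<bar>)^(k+2)"
      unfolding D_def by (simp add: mult_ac)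
    finally show "\<bar>v\<bar>^k * \<bar>incr m h \<theta> v y + \<theta> * y * deriv h v\<bar> \<le> D * \<theta>\<^sup>2 * (1 + \<bar>y\<bar>)^(k+2)"
      by (simp add: h1_def)
  qed
qed

lemma incr_bounded:
  assumes "\<And>x. \<bar>h x\<bar> \<le> B" and "\<bar>\<theta>\<bar> \<le> pi/4"
  shows "\<bar>incr m h \<theta> v y\<bar> \<le> (2^m + 1) * B"
proof -
  have B0: "0 \<le> B" using assms(1)[of 0] by linarith
  have "\<bar>h ((v - y * sin \<theta>) / cos \<theta>) / cos \<theta> ^ m\<bar> \<le> B * (1 / \<bar>cos \<theta>\<bar>^m)"
    using assms(1) by (simp add: abs_divide power_abs divide_right_mono)
  also have "\<dots> \<le> B * 2^m" using inverse_cos_power_le[OF assms(2)] B0 by (rule mult_left_mono)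
  finally have "\<bar>h ((v - y * sin \<theta>) / cos \<theta>) / cos \<theta> ^ m\<bar> \<le> B * 2^m" .
  moreover have "\<bar>incr m h \<theta> v y\<bar> \<le> \<bar>h ((v - y * sin \<theta>) / cos \<theta>) / cos \<theta> ^ m\<bar> + \<bar>h v\<bar>"
    unfolding incr_def by (rule abs_triangle_ineq4)
  ultimately show ?thesis using assms(1)[of v] by (simp add: algebra_simps)
qed

lemma incr_DERIV_v:
  assumes dh: "\<And>x. DERIV h x :> h' x" and c: "cos \<theta> \<noteq> 0"
  shows "DERIV (\<lambda>v. incr m h \<theta> v y) v :> incr (Suc m) h' \<theta> v y"
proof -
  have "DERIV (\<lambda>v. (v - y * sin \<theta>) / cos \<theta>) v :> 1 / cos \<theta>"
    using c by (auto intro!: derivative_eq_intros)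
  from DERIV_chain2[OF dh this]
  have "DERIV (\<lambda>v. h ((v - y * sin \<theta>) / cos \<theta>) / cos \<theta> ^ m - h v) v :>
      h' ((v - y * sin \<theta>) / cos \<theta>) * (1 / cos \<theta>) / cos \<theta> ^ m - h' v"
    by (intro DERIV_diff DERIV_cdivide dh)
  then show ?thesis unfolding incr_def by (rule DERIV_cong) (simp add: field_simps)
qed

section \<open>The second angular moment of the cross section\<close>

lemma cross_section_measurable:
  "cross_section s \<beta> \<Longrightarrow> (\<lambda>\<theta>. indicator angle_dom \<theta> * \<beta> \<theta>) \<in> borel_measurable lebesgue"
  unfolding cross_section_def by blast

lemma cross_section_nonneg: "cross_section s \<beta> \<Longrightarrow> \<theta> \<in> angle_dom \<Longrightarrow> 0 \<le> \<beta> \<theta>"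
  unfolding cross_section_def by blast

lemma angle_dom_abs: "\<theta> \<in> angle_dom \<Longrightarrow> \<bar>\<theta>\<bar> \<le> pi/4"
  by (auto simp: angle_dom_def)

lemma cross_section_moment2_le:
  fixes \<beta> :: "real \<Rightarrow> real"
  assumes th: "\<theta> \<in> angle_dom" and b0: "0 \<le> \<beta> \<theta>" and C: "0 \<le> C"
    and near: "\<bar>\<theta>\<bar> < \<delta>0 \<Longrightarrow> \<beta> \<theta> \<le> C * \<bar>\<theta>\<bar> powr (- 1 - 2 * s)"
  shows "\<beta> \<theta> * \<theta>\<^sup>2 \<le> indicator {\<theta>. \<delta>0 \<le> \<bar>\<theta>\<bar> \<and> \<bar>\<theta>\<bar> \<le> pi/4} \<theta> * \<beta> \<theta>
    + C * (indicator {-1..1} \<theta> * \<bar>\<theta>\<bar> powr (1 - 2 * s))"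
proof -
  have small: "\<bar>\<theta>\<bar> \<le> pi/4" "\<theta> \<noteq> 0" "\<bar>\<theta>\<bar> \<le> 1"
    using th pi_less_4 by (auto simp: angle_dom_def)
  have near_term: "0 \<le> C * (indicator {-1..1} \<theta> * \<bar>\<theta>\<bar> powr (1 - 2 * s))"
    using C by (simp add: indicator_def)
  show ?thesis
  proof (cases "\<delta>0 \<le> \<bar>\<theta>\<bar>")
    case True
    have "\<theta>\<^sup>2 \<le> 1" using small by (simp add: abs_square_le_1)
    then have "\<beta> \<theta> * \<theta>\<^sup>2 \<le> \<beta> \<theta>" using b0 by (simp add: mult_left_le)
    then show ?thesis using True small near_term by simp
  next
    case False
    have "\<bar>\<theta>\<bar> powr (- 1 - 2 * s) * \<theta>\<^sup>2 = \<bar>\<theta>\<bar> powr (- 1 - 2 * s) * \<bar>\<theta>\<bar> powr 2"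
      using small by (simp add: powr_numeral)
    also have "\<dots> = \<bar>\<theta>\<bar> powr (- 1 - 2 * s + 2)" by (rule powr_add[symmetric])
    also have "\<dots> = \<bar>\<theta>\<bar> powr (1 - 2 * s)" by simp
    finally have "\<beta> \<theta> * \<theta>\<^sup>2 \<le> C * \<bar>\<theta>\<bar> powr (1 - 2 * s)"
      using mult_right_mono[OF near, of "\<theta>\<^sup>2"] False by (simp add: mult.assoc)
    moreover have "\<theta> \<in> {-1..1}" using small by auto
    ultimately show ?thesis using False by simp
  qed
qed

text \<open>For s < 1 the cross section has a finite second angular moment: this is
  the only integrability of beta that the non-cutoff operator requires.\<close>
lemma cross_section_moment2_integrable:
  assumes s: "s < 1" and cs: "cross_section s \<beta>"
  shows "integrable lebesgue (\<lambda>\<theta>. indicator angle_dom \<theta> * (\<beta> \<theta> * \<theta>\<^sup>2))"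
proof -
  obtain C \<delta>0 where C: "0 < C" "0 < \<delta>0" and near: "\<And>\<theta>. \<theta> \<in> angle_dom \<Longrightarrow> \<bar>\<theta>\<bar> < \<delta>0 \<Longrightarrow>
      \<beta> \<theta> \<le> C * \<bar>\<theta>\<bar> powr (- 1 - 2 * s)"
    using cs unfolding cross_section_def by blast
  have "set_integrable lebesgue {\<theta>. \<delta>0 \<le> \<bar>\<theta>\<bar> \<and> \<bar>\<theta>\<bar> \<le> pi/4} \<beta>"
    using cs C(2) unfolding cross_section_def by blast
  then have far: "integrable lebesgue (\<lambda>\<theta>. indicator {\<theta>. \<delta>0 \<le> \<bar>\<theta>\<bar> \<and> \<bar>\<theta>\<bar> \<le> pi/4} \<theta> * \<beta> \<theta>)"
    by (simp add: set_integrable_def)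
  have close: "integrable lebesgue (\<lambda>\<theta>. C * (indicator {-1..1} \<theta> * \<bar>\<theta>\<bar> powr (1 - 2 * s)))"
    using integrable_abs_powr_near_0[of "1 - 2 * s"] s by simp
  show ?thesis
  proof (rule Bochner_Integration.integrable_bound[OF Bochner_Integration.integrable_add[OF far close]])
    have "(\<lambda>\<theta>::real. \<theta>\<^sup>2) \<in> borel_measurable lebesgue"
      by (rule measurable_completion) simp
    then have "(\<lambda>\<theta>. (indicator angle_dom \<theta> * \<beta> \<theta>) * \<theta>\<^sup>2) \<in> borel_measurable lebesgue"
      by (rule borel_measurable_times[OF cross_section_measurable[OF cs]])
    then show "(\<lambda>\<theta>. indicator angle_dom \<theta> * (\<beta> \<theta> * \<theta>\<^sup>2)) \<in> borel_measurable lebesgue"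
      by (simp add: mult_ac)
    show "AE \<theta> in lebesgue. norm (indicator angle_dom \<theta> * (\<beta> \<theta> * \<theta>\<^sup>2)) \<le>
      norm (indicator {\<theta>. \<delta>0 \<le> \<bar>\<theta>\<bar> \<and> \<bar>\<theta>\<bar> \<le> pi/4} \<theta> * \<beta> \<theta>
        + C * (indicator {-1..1} \<theta> * \<bar>\<theta>\<bar> powr (1 - 2 * s)))"
    proof (rule AE_I2)
      fix \<theta> :: real
      show "norm (indicator angle_dom \<theta> * (\<beta> \<theta> * \<theta>\<^sup>2)) \<le>
        norm (indicator {\<theta>. \<delta>0 \<le> \<bar>\<theta>\<bar> \<and> \<bar>\<theta>\<bar> \<le> pi/4} \<theta> * \<beta> \<theta>
          + C * (indicator {-1..1} \<theta> * \<bar>\<theta>\<bar> powr (1 - 2 * s)))"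
      proof (cases "\<theta> \<in> angle_dom")
        case True
        note b0 = cross_section_nonneg[OF cs True]
        have "\<beta> \<theta> * \<theta>\<^sup>2 \<le> indicator {\<theta>. \<delta>0 \<le> \<bar>\<theta>\<bar> \<and> \<bar>\<theta>\<bar> \<le> pi/4} \<theta> * \<beta> \<theta>
            + C * (indicator {-1..1} \<theta> * \<bar>\<theta>\<bar> powr (1 - 2 * s))"
          by (rule cross_section_moment2_le[where \<beta>=\<beta>, OF True b0]) (use C near[OF True] in auto)
        then show ?thesis using True b0 by simp
      qed simp
    qed
  qed
qed

section \<open>Velocity averages of the increment\<close>

text \<open>Standing assumptions: a cross section beta with s < 1, and a continuous,
  even, rapidly decreasing weight G (the even part of g).\<close>
locale kac_kernel =
  fixes s :: real and \<beta> G :: "real \<Rightarrow> real"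
  assumes s_less_1: "s < 1" and cross_section: "cross_section s \<beta>"
    and G_continuous: "continuous_on UNIV G" and G_rapid: "rapid G"
    and G_even: "\<And>y. G (-y) = G y"
begin

text \<open>Integral of the increment against G in the post-collisional variable,
  and its average over the angle with respect to beta.  For m = 1 and h = f
  the latter is K(g,f).\<close>
definition incr_integral :: "nat \<Rightarrow> (real \<Rightarrow> real) \<Rightarrow> real \<Rightarrow> real \<Rightarrow> real" where
  "incr_integral m h \<theta> v = (\<integral>y. G y * incr m h \<theta> v y \<partial>lborel)"

definition collision_integral :: "nat \<Rightarrow> (real \<Rightarrow> real) \<Rightarrow> real \<Rightarrow> real" where
  "collision_integral m h v = (LINT \<theta>:angle_dom|lebesgue. \<beta> \<theta> * incr_integral m h \<theta> v)"

lemma G_weighted_integrable: "integrable lborel (\<lambda>y. \<bar>G y\<bar> * (1 + \<bar>y\<bar>)^k)"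
proof -
  obtain C where C: "\<And>x. (1 + \<bar>x\<bar>)^(k+2) * \<bar>G x\<bar> \<le> C" using rapidD[OF G_rapid] by blast
  show ?thesis
  proof (rule integrable_quadratic_decay)
    show "continuous_on UNIV (\<lambda>y. \<bar>G y\<bar> * (1 + \<bar>y\<bar>)^k)"
      using G_continuous by (intro continuous_intros) auto
    have "b^2 * (a * b^k) = b^(k+2) * a" for a b :: real
      by (simp add: power_add mult_ac power2_eq_square)
    moreover have "\<bar>\<bar>G y\<bar> * (1 + \<bar>y\<bar>)^k\<bar> = \<bar>G y\<bar> * (1 + \<bar>y\<bar>)^k" for y
      by simp
    ultimately have eq: "(1 + \<bar>y\<bar>)\<^sup>2 * \<bar>\<bar>G y\<bar> * (1 + \<bar>y\<bar>)^k\<bar> = (1 + \<bar>y\<bar>)^(k+2) * \<bar>G y\<bar>" for y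
      by (simp only:)
    show "(1 + \<bar>y\<bar>)\<^sup>2 * \<bar>\<bar>G y\<bar> * (1 + \<bar>y\<bar>)^k\<bar> \<le> C" for y
      unfolding eq by (rule C)
  qed
qed

lemma G_measurable: "G \<in> borel_measurable lborel"
  using G_continuous by (simp add: borel_measurable_continuous_onI)

lemma G_integrable: "integrable lborel G"
  using G_weighted_integrable[of 0] integrable_abs_iff[OF G_measurable] by simp

lemma G_first_moment_integrable: "integrable lborel (\<lambda>y. G y * y)"
proof (rule Bochner_Integration.integrable_bound[OF G_weighted_integrable[of 1]])
  show "(\<lambda>y. G y * y) \<in> borel_measurable lborel" using G_measurable by measurable
  show "AE x in lborel. norm (G x * x) \<le> norm (\<bar>G x\<bar> * (1 + \<bar>x\<bar>)^1)"
    by (intro AE_I2) (simp add: abs_mult mult_left_mono)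
qed

text \<open>Since G is even its first moment vanishes; this kills the first order
  term of the Taylor expansion of the increment.\<close>
lemma G_first_moment_zero: "(\<integral>y. G y * y \<partial>lborel) = 0"
proof -
  have "(\<integral>y. G y * y \<partial>lborel) = \<bar>-1\<bar> *\<^sub>R (\<integral>x. G (0 + -1 * x) * (0 + -1 * x) \<partial>lborel)"
    by (rule lborel_integral_real_affine) simp
  also have "\<dots> = - (\<integral>y. G y * y \<partial>lborel)" by (simp add: G_even)
  finally show ?thesis by simp
qed

lemma G_incr_continuous:
  assumes "continuous_on UNIV h"
  shows "continuous_on UNIV (\<lambda>y. G y * incr m h \<theta> v y)"
  unfolding incr_def divide_inverse using G_continuous
  by (intro continuous_intros continuous_on_compose2[OF assms]) auto

lemma G_incr_measurable:
  "continuous_on UNIV h \<Longrightarrow> (\<lambda>y. G y * incr m h \<theta> v y) \<in> borel_measurable lborel"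
  using G_incr_continuous by (simp add: borel_measurable_continuous_onI)

lemma G_incr_bound:
  assumes "\<And>x. \<bar>h x\<bar> \<le> B" "\<bar>\<theta>\<bar> \<le> pi/4"
  shows "\<bar>G y * incr m h \<theta> v y\<bar> \<le> (2^m + 1) * B * \<bar>G y\<bar>"
  using mult_left_mono[OF incr_bounded[OF assms], of "\<bar>G y\<bar>"] by (simp add: abs_mult mult_ac)

lemma G_incr_integrable:
  assumes "continuous_on UNIV h" "\<And>x. \<bar>h x\<bar> \<le> B" "\<bar>\<theta>\<bar> \<le> pi/4"
  shows "integrable lborel (\<lambda>y. G y * incr m h \<theta> v y)"
proof (rule Bochner_Integration.integrable_bound)
  show "integrable lborel (\<lambda>y. (2^m + 1) * B * \<bar>G y\<bar>)"
    using G_integrable by (intro integrable_mult_right integrable_abs)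
  have "0 \<le> B" using assms(2)[of 0] by linarith
  then show "AE y in lborel. norm (G y * incr m h \<theta> v y) \<le> norm ((2^m + 1) * B * \<bar>G y\<bar>)"
    using G_incr_bound[OF assms(2,3)] by (intro AE_I2) (simp add: abs_mult)
qed (rule G_incr_measurable[OF assms(1)])

lemma incr_integral_second_order:
  assumes h: "schwartz h" and th: "\<bar>\<theta>\<bar> \<le> pi/4"
  shows "integrable lborel (\<lambda>y. G y * (incr m h \<theta> v y + \<theta> * y * deriv h v))"
    "incr_integral m h \<theta> v = (\<integral>y. G y * (incr m h \<theta> v y + \<theta> * y * deriv h v) \<partial>lborel)"
proof -
  obtain B where B: "\<And>x. \<bar>h x\<bar> \<le> B" using rapid_bounded[OF schwartz_rapid[OF h]] by auto
  have i1: "integrable lborel (\<lambda>y. G y * incr m h \<theta> v y)"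
    by (rule G_incr_integrable[OF schwartz_continuous[OF h] B th])
  have i2: "integrable lborel (\<lambda>y. (\<theta> * deriv h v) * (G y * y))"
    using G_first_moment_integrable by simp
  have split: "(\<lambda>y. G y * (incr m h \<theta> v y + \<theta> * y * deriv h v))
      = (\<lambda>y. G y * incr m h \<theta> v y + (\<theta> * deriv h v) * (G y * y))"
    by (simp add: algebra_simps)
  show "integrable lborel (\<lambda>y. G y * (incr m h \<theta> v y + \<theta> * y * deriv h v))"
    unfolding split using i1 i2 by simp
  show "incr_integral m h \<theta> v = (\<integral>y. G y * (incr m h \<theta> v y + \<theta> * y * deriv h v) \<partial>lborel)"
    unfolding split incr_integral_def using i1 i2 G_first_moment_zero by (simp add: integral_add)
qed

lemma incr_integral_estimate:
  assumes h: "schwartz h"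
  shows "\<exists>D. \<forall>\<theta> v. \<bar>\<theta>\<bar> \<le> pi/4 \<longrightarrow> \<bar>v\<bar>^k * \<bar>incr_integral m h \<theta> v\<bar> \<le> D * \<theta>\<^sup>2"
proof -
  obtain D where D: "\<And>\<theta> v y. \<bar>\<theta>\<bar> \<le> pi/4 \<Longrightarrow>
     \<bar>v\<bar>^k * \<bar>incr m h \<theta> v y + \<theta> * y * deriv h v\<bar> \<le> D * \<theta>\<^sup>2 * (1 + \<bar>y\<bar>)^(k+2)"
    using incr_second_order_estimate[OF h, of k m] by blast
  define I where "I = (\<integral>y. \<bar>G y\<bar> * (1 + \<bar>y\<bar>)^(k+2) \<partial>lborel)"
  show ?thesis
  proof (intro exI[of _ "D * I"] allI impI)
    fix \<theta> v :: real assume th: "\<bar>\<theta>\<bar> \<le> pi/4"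
    define R where "R = (\<lambda>y. G y * (incr m h \<theta> v y + \<theta> * y * deriv h v))"
    note R = incr_integral_second_order[OF h th, of m v, folded R_def]
    have pointwise: "\<bar>\<bar>v\<bar>^k * R y\<bar> \<le> (D * \<theta>\<^sup>2) * (\<bar>G y\<bar> * (1 + \<bar>y\<bar>)^(k+2))" for y
    proof -
      have "\<bar>\<bar>v\<bar>^k * R y\<bar> = \<bar>G y\<bar> * (\<bar>v\<bar>^k * \<bar>incr m h \<theta> v y + \<theta> * y * deriv h v\<bar>)"
        unfolding R_def by (simp only: abs_mult power_abs abs_abs mult_ac)
      also have "\<dots> \<le> \<bar>G y\<bar> * (D * \<theta>\<^sup>2 * (1 + \<bar>y\<bar>)^(k+2))"
        by (rule mult_left_mono[OF D[OF th]]) simp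
      finally show ?thesis by (simp add: mult_ac)
    qed
    have "\<bar>v\<bar>^k * \<bar>incr_integral m h \<theta> v\<bar> = \<bar>\<integral>y. \<bar>v\<bar>^k * R y \<partial>lborel\<bar>"
      unfolding R(2) R_def by (simp add: abs_mult)
    also have "\<dots> \<le> (\<integral>y. \<bar>\<bar>v\<bar>^k * R y\<bar> \<partial>lborel)"
      by (rule integral_abs_bound)
    also have "\<dots> \<le> (\<integral>y. (D * \<theta>\<^sup>2) * (\<bar>G y\<bar> * (1 + \<bar>y\<bar>)^(k+2)) \<partial>lborel)"
    proof (rule integral_mono[OF _ _ pointwise])
      show "integrable lborel (\<lambda>y. \<bar>\<bar>v\<bar>^k * R y\<bar>)"
        using R(1) by (intro integrable_abs integrable_mult_right)
      show "integrable lborel (\<lambda>y. (D * \<theta>\<^sup>2) * (\<bar>G y\<bar> * (1 + \<bar>y\<bar>)^(k+2)))"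
        by (intro integrable_mult_right G_weighted_integrable)
    qed
    also have "\<dots> = D * I * \<theta>\<^sup>2"
      unfolding I_def integral_mult_right_zero by (simp only: mult_ac)
    finally show "\<bar>v\<bar>^k * \<bar>incr_integral m h \<theta> v\<bar> \<le> D * I * \<theta>\<^sup>2" .
  qed
qed

lemma incr_integral_DERIV:
  assumes h: "schwartz h" and th: "\<bar>\<theta>\<bar> \<le> pi/4"
  shows "DERIV (\<lambda>v. incr_integral m h \<theta> v) v0 :> incr_integral (Suc m) (deriv h) \<theta> v0"
proof -
  obtain B where B: "\<And>x. \<bar>h x\<bar> \<le> B" using rapid_bounded[OF schwartz_rapid[OF h]] by auto
  obtain B1 where B1: "\<And>x. \<bar>deriv h x\<bar> \<le> B1"
    using rapid_bounded[OF schwartz_rapid[OF schwartz_deriv[OF h]]] by auto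
  have c: "cos \<theta> \<noteq> 0" using small_angle_trig_bounds(1)[OF th] by auto
  show ?thesis unfolding incr_integral_def
  proof (rule DERIV_parametric_integral[where w="\<lambda>y. (2^Suc m + 1) * B1 * \<bar>G y\<bar>"])
    show "integrable lborel (\<lambda>y. G y * incr m h \<theta> v y)" for v
      by (rule G_incr_integrable[OF schwartz_continuous[OF h] B th])
    show "(\<lambda>y. G y * incr (Suc m) (deriv h) \<theta> v y) \<in> borel_measurable lborel" for v
      by (rule G_incr_measurable[OF schwartz_continuous[OF schwartz_deriv[OF h]]])
    show "integrable lborel (\<lambda>y. (2^Suc m + 1) * B1 * \<bar>G y\<bar>)"
      using G_integrable by (intro integrable_mult_right integrable_abs)
    show "((\<lambda>v. G y * incr m h \<theta> v y) has_real_derivative G y * incr (Suc m) (deriv h) \<theta> v y) (at v)"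
      for y v by (intro DERIV_cmult incr_DERIV_v[OF schwartz_has_deriv[OF h] c])
    show "\<bar>G y * incr (Suc m) (deriv h) \<theta> v y\<bar> \<le> (2^Suc m + 1) * B1 * \<bar>G y\<bar>" for y v
      by (rule G_incr_bound[OF B1 th])
  qed
qed

text \<open>Continuity in the angle, needed for measurability of the angular integrand.\<close>
lemma incr_integral_continuous_angle:
  assumes h: "schwartz h"
  shows "continuous_on {-pi/4..pi/4} (\<lambda>\<theta>. incr_integral m h \<theta> v)"
  unfolding continuous_on_def
proof
  fix \<theta>0 assume t0: "\<theta>0 \<in> {-pi/4..pi/4}"
  obtain B where B: "\<And>x. \<bar>h x\<bar> \<le> B" using rapid_bounded[OF schwartz_rapid[OF h]] by auto
  have hc: "continuous_on UNIV h" by (rule schwartz_continuous[OF h])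
  show "((\<lambda>\<theta>. incr_integral m h \<theta> v) \<longlongrightarrow> incr_integral m h \<theta>0 v) (at \<theta>0 within {-pi/4..pi/4})"
    unfolding incr_integral_def
  proof (rule integral_tendsto_at_dominated[where w="\<lambda>y. (2^m + 1) * B * \<bar>G y\<bar>"])
    show "(\<lambda>y. G y * incr m h t v y) \<in> borel_measurable lborel" for t
      by (rule G_incr_measurable[OF hc])
    show "(\<lambda>y. G y * incr m h \<theta>0 v y) \<in> borel_measurable lborel"
      by (rule G_incr_measurable[OF hc])
    show "integrable lborel (\<lambda>y. (2^m + 1) * B * \<bar>G y\<bar>)"
      using G_integrable by (intro integrable_mult_right integrable_abs)
    show "((\<lambda>t. G y * incr m h t v y) \<longlongrightarrow> G y * incr m h \<theta>0 v y) (at \<theta>0 within {-pi/4..pi/4})" for y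
    proof -
      have "\<bar>\<theta>0\<bar> \<le> pi/4" using t0 by auto
      then have "cos \<theta>0 \<noteq> 0" using small_angle_trig_bounds(1)[of \<theta>0] by auto
      moreover have hC: "isCont h x" for x using hc by (simp add: continuous_on_eq_continuous_at)
      ultimately have "isCont (\<lambda>t. G y * incr m h t v y) \<theta>0"
        unfolding incr_def by (intro continuous_intros isCont_o2[OF _ hC]) auto
      then show ?thesis unfolding isCont_def by (rule tendsto_within_subset) simp
    qed
    show "\<bar>G y * incr m h t v y\<bar> \<le> (2^m + 1) * B * \<bar>G y\<bar>" if "t \<in> {-pi/4..pi/4}" for t y
      using that by (intro G_incr_bound[OF B]) auto
  qed
qed

lemma collision_integral_eq:
  "collision_integral m h v = (\<integral>\<theta>. indicator angle_dom \<theta> * (\<beta> \<theta> * incr_integral m h \<theta> v) \<partial>lebesgue)"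
  unfolding collision_integral_def set_lebesgue_integral_def by simp

lemma angular_integrand_measurable:
  assumes h: "schwartz h"
  shows "(\<lambda>\<theta>. indicator angle_dom \<theta> * (\<beta> \<theta> * incr_integral m h \<theta> v)) \<in> borel_measurable lebesgue"
proof -
  have "(\<lambda>\<theta>. indicator {-pi/4..pi/4} \<theta> *\<^sub>R incr_integral m h \<theta> v) \<in> borel_measurable borel"
    by (rule borel_measurable_continuous_on_indicator[OF _ incr_integral_continuous_angle[OF h]]) simp
  then have "(\<lambda>\<theta>. indicator {-pi/4..pi/4} \<theta> * incr_integral m h \<theta> v) \<in> borel_measurable lebesgue"
    by (intro measurable_completion) simp
  from borel_measurable_times[OF cross_section_measurable[OF cross_section] this]
  have "(\<lambda>\<theta>. (indicator angle_dom \<theta> * \<beta> \<theta>) * (indicator {-pi/4..pi/4} \<theta> * incr_integral m h \<theta> v))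
      \<in> borel_measurable lebesgue" .
  moreover have "(\<lambda>\<theta>. (indicator angle_dom \<theta> * \<beta> \<theta>) * (indicator {-pi/4..pi/4} \<theta> * incr_integral m h \<theta> v))
      = (\<lambda>\<theta>. indicator angle_dom \<theta> * (\<beta> \<theta> * incr_integral m h \<theta> v))"
    by (rule ext) (auto simp: indicator_def angle_dom_def)
  ultimately show ?thesis by simp
qed

lemma angular_integrand_bound:
  assumes h: "schwartz h"
  obtains D where "\<And>\<theta> v. \<bar>v\<bar>^k * \<bar>indicator angle_dom \<theta> * (\<beta> \<theta> * incr_integral m h \<theta> v)\<bar>
      \<le> D * (indicator angle_dom \<theta> * (\<beta> \<theta> * \<theta>\<^sup>2))"
proof -
  obtain D where D: "\<And>\<theta> v. \<bar>\<theta>\<bar> \<le> pi/4 \<Longrightarrow> \<bar>v\<bar>^k * \<bar>incr_integral m h \<theta> v\<bar> \<le> D * \<theta>\<^sup>2"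
    using incr_integral_estimate[OF h, of k m] by blast
  have "\<bar>v\<bar>^k * \<bar>indicator angle_dom \<theta> * (\<beta> \<theta> * incr_integral m h \<theta> v)\<bar>
      \<le> D * (indicator angle_dom \<theta> * (\<beta> \<theta> * \<theta>\<^sup>2))" for \<theta> v
  proof (cases "\<theta> \<in> angle_dom")
    case True
    note b0 = cross_section_nonneg[OF cross_section True]
    have "\<bar>v\<bar>^k * \<bar>indicator angle_dom \<theta> * (\<beta> \<theta> * incr_integral m h \<theta> v)\<bar>
        = \<beta> \<theta> * (\<bar>v\<bar>^k * \<bar>incr_integral m h \<theta> v\<bar>)"
      using True b0 by (simp add: abs_mult mult_ac)
    also have "\<dots> \<le> \<beta> \<theta> * (D * \<theta>\<^sup>2)"
      by (rule mult_left_mono[OF D[OF angle_dom_abs[OF True]] b0])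
    finally show ?thesis using True by (simp add: mult_ac)
  qed simp
  then show ?thesis by (rule that)
qed

lemma angular_integrand_integrable:
  assumes h: "schwartz h"
  shows "integrable lebesgue (\<lambda>\<theta>. indicator angle_dom \<theta> * (\<beta> \<theta> * incr_integral m h \<theta> v))"
proof -
  obtain D where D: "\<And>\<theta> v. \<bar>v\<bar>^0 * \<bar>indicator angle_dom \<theta> * (\<beta> \<theta> * incr_integral m h \<theta> v)\<bar>
      \<le> D * (indicator angle_dom \<theta> * (\<beta> \<theta> * \<theta>\<^sup>2))"
    using angular_integrand_bound[OF h] by blast
  show ?thesis
  proof (rule Bochner_Integration.integrable_bound[OF _ angular_integrand_measurable[OF h]])
    show "integrable lebesgue (\<lambda>\<theta>. D * (indicator angle_dom \<theta> * (\<beta> \<theta> * \<theta>\<^sup>2)))"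
      using cross_section_moment2_integrable[OF s_less_1 cross_section] by (rule integrable_mult_right)
    show "AE \<theta> in lebesgue. norm (indicator angle_dom \<theta> * (\<beta> \<theta> * incr_integral m h \<theta> v))
        \<le> norm (D * (indicator angle_dom \<theta> * (\<beta> \<theta> * \<theta>\<^sup>2)))"
      using D by (intro AE_I2) (simp add: order_trans[OF _ abs_ge_self])
  qed
qed

lemma collision_integral_decay:
  assumes h: "schwartz h"
  shows "\<exists>E. \<forall>v. \<bar>v\<bar>^k * \<bar>collision_integral m h v\<bar> \<le> E"
proof -
  obtain D where D: "\<And>\<theta> v. \<bar>v\<bar>^k * \<bar>indicator angle_dom \<theta> * (\<beta> \<theta> * incr_integral m h \<theta> v)\<bar>
      \<le> D * (indicator angle_dom \<theta> * (\<beta> \<theta> * \<theta>\<^sup>2))"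
    using angular_integrand_bound[OF h] by blast
  define F where "F = (\<lambda>v \<theta>. \<bar>v\<bar>^k * (indicator angle_dom \<theta> * (\<beta> \<theta> * incr_integral m h \<theta> v)))"
  show ?thesis
  proof (intro exI allI)
    fix v
    have "\<bar>v\<bar>^k * \<bar>collision_integral m h v\<bar> = \<bar>\<integral>\<theta>. F v \<theta> \<partial>lebesgue\<bar>"
      unfolding collision_integral_eq F_def by (simp add: abs_mult)
    also have "\<dots> \<le> (\<integral>\<theta>. \<bar>F v \<theta>\<bar> \<partial>lebesgue)"
      by (rule integral_abs_bound)
    also have "\<dots> \<le> (\<integral>\<theta>. D * (indicator angle_dom \<theta> * (\<beta> \<theta> * \<theta>\<^sup>2)) \<partial>lebesgue)"
    proof (rule integral_mono)
      show "integrable lebesgue (\<lambda>\<theta>. \<bar>F v \<theta>\<bar>)"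
        unfolding F_def using angular_integrand_integrable[OF h]
        by (intro integrable_abs integrable_mult_right)
      show "integrable lebesgue (\<lambda>\<theta>. D * (indicator angle_dom \<theta> * (\<beta> \<theta> * \<theta>\<^sup>2)))"
        using cross_section_moment2_integrable[OF s_less_1 cross_section] by (rule integrable_mult_right)
      show "\<bar>F v \<theta>\<bar> \<le> D * (indicator angle_dom \<theta> * (\<beta> \<theta> * \<theta>\<^sup>2))" for \<theta>
        using D[of v \<theta>] unfolding F_def by (simp add: abs_mult)
    qed
    finally show "\<bar>v\<bar>^k * \<bar>collision_integral m h v\<bar>
        \<le> (\<integral>\<theta>. D * (indicator angle_dom \<theta> * (\<beta> \<theta> * \<theta>\<^sup>2)) \<partial>lebesgue)" .
  qed
qed

lemma collision_integral_DERIV: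
  assumes h: "schwartz h"
  shows "DERIV (collision_integral m h) v0 :> collision_integral (Suc m) (deriv h) v0"
proof -
  have h1: "schwartz (deriv h)" by (rule schwartz_deriv[OF h])
  obtain D where D: "\<And>\<theta> v. \<bar>v\<bar>^0 * \<bar>indicator angle_dom \<theta> * (\<beta> \<theta> * incr_integral (Suc m) (deriv h) \<theta> v)\<bar>
      \<le> D * (indicator angle_dom \<theta> * (\<beta> \<theta> * \<theta>\<^sup>2))"
    using angular_integrand_bound[OF h1] by blast
  have "((\<lambda>v. \<integral>\<theta>. indicator angle_dom \<theta> * (\<beta> \<theta> * incr_integral m h \<theta> v) \<partial>lebesgue) has_real_derivative
      (\<integral>\<theta>. indicator angle_dom \<theta> * (\<beta> \<theta> * incr_integral (Suc m) (deriv h) \<theta> v0) \<partial>lebesgue)) (at v0)"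
  proof (rule DERIV_parametric_integral[where w="\<lambda>\<theta>. D * (indicator angle_dom \<theta> * (\<beta> \<theta> * \<theta>\<^sup>2))"])
    show "integrable lebesgue (\<lambda>\<theta>. indicator angle_dom \<theta> * (\<beta> \<theta> * incr_integral m h \<theta> v))" for v
      by (rule angular_integrand_integrable[OF h])
    show "(\<lambda>\<theta>. indicator angle_dom \<theta> * (\<beta> \<theta> * incr_integral (Suc m) (deriv h) \<theta> v))
        \<in> borel_measurable lebesgue" for v
      by (rule angular_integrand_measurable[OF h1])
    show "integrable lebesgue (\<lambda>\<theta>. D * (indicator angle_dom \<theta> * (\<beta> \<theta> * \<theta>\<^sup>2)))"
      using cross_section_moment2_integrable[OF s_less_1 cross_section] by (rule integrable_mult_right)
    show "\<bar>indicator angle_dom \<theta> * (\<beta> \<theta> * incr_integral (Suc m) (deriv h) \<theta> v)\<bar>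
        \<le> D * (indicator angle_dom \<theta> * (\<beta> \<theta> * \<theta>\<^sup>2))" for \<theta> v
      using D[of v \<theta>] by simp
    show "((\<lambda>v. indicator angle_dom \<theta> * (\<beta> \<theta> * incr_integral m h \<theta> v)) has_real_derivative
        indicator angle_dom \<theta> * (\<beta> \<theta> * incr_integral (Suc m) (deriv h) \<theta> v)) (at v)" for \<theta> v
    proof (cases "\<theta> \<in> angle_dom")
      case True
      then show ?thesis by (intro DERIV_cmult incr_integral_DERIV[OF h angle_dom_abs])
    qed simp
  qed
  then show ?thesis unfolding collision_integral_eq[abs_def] by (simp add: collision_integral_eq)
qed

lemma collision_integral_iterated_deriv:
  assumes h: "schwartz h"
  shows "(deriv^^n) (collision_integral m h) = collision_integral (m + n) ((deriv^^n) h)"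
proof (induction n)
  case (Suc n)
  have "deriv (collision_integral (m + n) ((deriv^^n) h))
      = collision_integral (Suc (m + n)) (deriv ((deriv^^n) h))"
    using collision_integral_DERIV[OF schwartz_iterated_deriv[OF h]] by (intro ext DERIV_imp_deriv)
  then show ?case using Suc by simp
qed simp

lemma collision_integral_schwartz:
  assumes h: "schwartz h"
  shows "schwartz (collision_integral m h)"
  unfolding schwartz_def collision_integral_iterated_deriv[OF h]
proof (intro conjI allI)
  fix n k :: nat and x :: real
  note hn = schwartz_iterated_deriv[OF h, of n]
  show "collision_integral (m + n) ((deriv^^n) h) differentiable (at x)"
    using collision_integral_DERIV[OF hn] real_differentiable_def by blast
  show "\<exists>C. \<forall>x. \<bar>x\<bar>^k * \<bar>collision_integral (m + n) ((deriv^^n) h) x\<bar> \<le> C"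
    by (rule collision_integral_decay[OF hn])
qed

section \<open>The collision operator as an angular average\<close>

text \<open>Change of variables y = v sin(theta) + v_* cos(theta) in the inner
  integral of K: the rotated velocity v' becomes (v - y sin theta) / cos theta
  and the Jacobian is 1 / cos theta.\<close>
lemma inner_integral_eq:
  assumes th: "\<theta> \<in> angle_dom" and f: "schwartz f"
  shows "(LINT vs|lebesgue. G (v * sin \<theta> + vs * cos \<theta>) * f (v * cos \<theta> - vs * sin \<theta>) - G vs * f v)
      = incr_integral 1 f \<theta> v"
proof -
  have tb: "\<bar>\<theta>\<bar> \<le> pi/4" by (rule angle_dom_abs[OF th])
  have cp: "0 < cos \<theta>" using small_angle_trig_bounds(1)[OF tb] by simp
  obtain B where B: "\<And>x. \<bar>f x\<bar> \<le> B" using rapid_bounded[OF schwartz_rapid[OF f]] by auto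
  have iI: "integrable lborel (\<lambda>y. G y * incr 1 f \<theta> v y)"
    by (rule G_incr_integrable[OF schwartz_continuous[OF f] B tb])
  define F where "F = (\<lambda>y. G y * incr 1 f \<theta> v y + f v * G y)"
  have iF: "integrable lborel F"
    unfolding F_def using iI G_integrable by (intro Bochner_Integration.integrable_add) auto
  define P where "P = (\<lambda>x. G (v * sin \<theta> + x * cos \<theta>) * f (v * cos \<theta> - x * sin \<theta>))"
  have P_eq: "P x = cos \<theta> * F (v * sin \<theta> + cos \<theta> * x)" for x
  proof -
    have "(v - (v * sin \<theta> + cos \<theta> * x) * sin \<theta>) / cos \<theta> = v * cos \<theta> - x * sin \<theta>"
      using cp apply (simp add: field_simps power2_eq_square)
      by (metis distrib_left mult.right_neutral sin_cos_squared_add3)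
    then have "F (v * sin \<theta> + cos \<theta> * x) = P x / cos \<theta>"
      unfolding F_def P_def incr_def power_one_right by (simp only:) (simp add: algebra_simps)
    then show ?thesis using cp by simp
  qed
  have iP: "integrable lborel P"
    unfolding P_eq[abs_def] using lborel_integrable_real_affine[OF iF, of "cos \<theta>" "v * sin \<theta>"] cp
    by (intro integrable_mult_right) simp
  have intP: "(\<integral>x. P x \<partial>lborel) = (\<integral>y. F y \<partial>lborel)"
    using lborel_integral_real_affine[of "cos \<theta>" F "v * sin \<theta>"] cp unfolding P_eq by simp
  have iQ: "integrable lborel (\<lambda>x. G x * f v)" using G_integrable by simp
  have "(LINT vs|lebesgue. G (v * sin \<theta> + vs * cos \<theta>) * f (v * cos \<theta> - vs * sin \<theta>) - G vs * f v)
      = (\<integral>x. P x - G x * f v \<partial>lborel)"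
  proof -
    have "(\<lambda>x. P x - G x * f v) \<in> borel_measurable lborel"
      using iP iQ by (intro borel_measurable_diff) auto
    then show ?thesis unfolding P_def by (rule integral_completion)
  qed
  also have "\<dots> = (\<integral>y. F y \<partial>lborel) - (\<integral>x. f v * G x \<partial>lborel)"
    using iP iQ by (simp add: intP Bochner_Integration.integral_diff mult.commute)
  also have "(\<integral>y. F y \<partial>lborel) = incr_integral 1 f \<theta> v + (\<integral>x. f v * G x \<partial>lborel)"
    unfolding F_def incr_integral_def using iI G_integrable by (intro Bochner_Integration.integral_add) auto
  finally show ?thesis by simp
qed

end

theorem lemma4p2:
  fixes s :: real and \<beta> f g :: "real \<Rightarrow> real"
  assumes "0 < s" "s < 1"
    and "cross_section s \<beta>"
    and "schwartz f" "schwartz g"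
  shows "schwartz (kac_K \<beta> g f)"
proof -
  interpret kac_kernel s \<beta> "even_part g"
    using assms(2,3) even_part_continuous[OF schwartz_continuous[OF assms(5)]]
      even_part_rapid[OF schwartz_rapid[OF assms(5)]] even_part_even
    by unfold_locales auto
  have "kac_K \<beta> g f = collision_integral 1 f"
  proof
    fix v
    have "angle_dom \<in> sets lebesgue" unfolding angle_dom_def by simp
    then show "kac_K \<beta> g f v = collision_integral 1 f v"
      unfolding kac_K_def collision_integral_def
      by (rule set_lebesgue_integral_cong) (simp add: inner_integral_eq[OF _ assms(4)])
  qed
  then show ?thesis using collision_integral_schwartz[OF assms(4)] by simp
qed

end
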